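(* Let $G$ be a graph with $n$ nodes and graph Laplacian $\mathbf{L}$, and let $\mathbf{L}=\mathbf{U}\mathbf{\Sigma}\mathbf{U}^T$ be an eigendecomposition of $\mathbf{L}$. Then for any $n\times n$ permutation matrix $\mathbf{M}$, the matrix $\mathbf{U}\mathbf{\Sigma}^{1/2}\mathbf{M}$ is adjacency-identifying.
   Context: Graphs are finite, undirected, without self-loops and without isolated nodes; $\mathbf{L}=\mathbf{D}-\mathbf{A}(G)$ with $\mathbf{D}$ the degree matrix and $\mathbf{A}(G)$ the adjacency matrix. In the eigendecomposition, $\mathbf{U}$ is orthogonal (columns are orthonormal eigenvectors) and $\mathbf{\Sigma}$ is diagonal with the (nonnegative) eigenvalues. $d_k>0$ is a fixed constant. A matrix $\mathbf{P}\in\mathbb{R}^{n\times e}$ is adjacency-identifying if there exist $\mathbf{W}^Q,\mathbf{W}^K\in\mathbb{R}^{e\times e}$ such that $\tilde{\mathbf{P}}=\frac{1}{\sqrt{d_k}}\mathbf{P}\mathbf{W}^Q(\mathbf{P}\mathbf{W}^K)^T$ satisfies $\tilde{\mathbf{P}}_{ij}=\max_k\tilde{\mathbf{P}}_{ik}\iff\mathbf{A}(G)_{ij}=1$ for all $i,j$. *)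

theory Defs
  imports "HOL-Analysis.Analysis" "HOL-Combinatorics.Permutations"
begin

definition simple_graph_no_isolated :: "('n::finite \<Rightarrow> 'n \<Rightarrow> bool) \<Rightarrow> bool" where
  "simple_graph_no_isolated E \<longleftrightarrow>
     (\<forall>i j. E i j \<longleftrightarrow> E j i) \<and> (\<forall>i. \<not> E i i) \<and> (\<forall>i. \<exists>j. E i j)"

definition adj_matrix :: "('n::finite \<Rightarrow> 'n \<Rightarrow> bool) \<Rightarrow> real^'n^'n" where
  "adj_matrix E = (\<chi> i j. if E i j then 1 else 0)"

definition degree_matrix :: "('n::finite \<Rightarrow> 'n \<Rightarrow> bool) \<Rightarrow> real^'n^'n" where
  "degree_matrix E = (\<chi> i j. if i = j then (\<Sum>k\<in>UNIV. adj_matrix E $ i $ k) else 0)"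

definition laplacian :: "('n::finite \<Rightarrow> 'n \<Rightarrow> bool) \<Rightarrow> real^'n^'n" where
  "laplacian E = degree_matrix E - adj_matrix E"

definition is_diagonal :: "real^'n^'n \<Rightarrow> bool" where
  "is_diagonal S \<longleftrightarrow> (\<forall>i j. i \<noteq> j \<longrightarrow> S $ i $ j = 0)"

definition is_eigendecomposition :: "real^'n^'n \<Rightarrow> real^'n^'n \<Rightarrow> real^'n^'n \<Rightarrow> bool" where
  "is_eigendecomposition L U S \<longleftrightarrow>
     orthogonal_matrix U \<and> is_diagonal S \<and> (\<forall>i. S $ i $ i \<ge> 0) \<and>
     L = U ** S ** transpose U"

definition diag_sqrt :: "real^'n^'n \<Rightarrow> real^'n^'n" where
  "diag_sqrt S = (\<chi> i j. if i = j then sqrt (S $ i $ i) else 0)"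

definition permutation_matrix :: "real^'n^'n \<Rightarrow> bool" where
  "permutation_matrix M \<longleftrightarrow>
     (\<exists>p. p permutes (UNIV :: 'n set) \<and> M = (\<chi> i j. if p i = j then 1 else 0))"

definition adjacency_identifying ::
    "real \<Rightarrow> ('n::finite \<Rightarrow> 'n \<Rightarrow> bool) \<Rightarrow> real^'e::finite^'n \<Rightarrow> bool" where
  "adjacency_identifying dk E P \<longleftrightarrow>
     (\<exists>WQ WK :: real^'e^'e.
        let Pt = (1 / sqrt dk) *\<^sub>R ((P ** WQ) ** transpose (P ** WK)) in
        \<forall>i j. Pt $ i $ j = Max (range (\<lambda>k. Pt $ i $ k)) \<longleftrightarrow> adj_matrix E $ i $ j = 1)"

end

theory Submission
  imports Defs
begin

text \<open>Any factor P = U \<Sigma>^(1/2) M with M orthogonal satisfies P P^T = L. Taking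
  W^Q = I and W^K = -I makes the attention matrix a positive multiple of -L. In row i
  of -L the diagonal entry is minus the degree, hence negative since i is not isolated,
  the entries at neighbours of i are 1 and all other entries are 0; so the row maximum
  is attained exactly at the neighbours.\<close>

lemma orthogonal_matrix_permutation_matrix:
  fixes M :: "real^'n::finite^'n"
  assumes "permutation_matrix M"
  shows "orthogonal_matrix M"
proof -
  obtain p where p: "p permutes (UNIV :: 'n set)" "M = (\<chi> i j. if p i = j then 1 else 0)"
    using assms unfolding permutation_matrix_def by blast
  have "(M ** transpose M) $ i $ j = mat 1 $ i $ j" for i j
  proof -
    have "(M ** transpose M) $ i $ j
        = (\<Sum>k\<in>UNIV. (if p i = k then 1 else 0) * (if p j = k then 1 else 0))"
      by (simp add: matrix_matrix_mult_def transpose_def p(2))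
    also have "\<dots> = (\<Sum>k\<in>UNIV. if k = p i then (if p j = p i then 1 else 0) else 0)"
      by (rule sum.cong) auto
    also have "\<dots> = mat 1 $ i $ j"
      using permutes_inj[OF p(1)] by (auto simp: mat_def dest: injD)
    finally show ?thesis .
  qed
  then have "M ** transpose M = mat 1"
    by (simp add: vec_eq_iff)
  then show ?thesis
    by (simp add: orthogonal_matrix_def matrix_left_right_inverse)
qed

lemma transpose_diag_sqrt [simp]: "transpose (diag_sqrt S) = diag_sqrt S"
  by (simp add: transpose_def diag_sqrt_def vec_eq_iff)

lemma diag_sqrt_mult_self:
  fixes S :: "real^'n::finite^'n"
  assumes "is_diagonal S" and "\<And>i. S $ i $ i \<ge> 0"
  shows "diag_sqrt S ** diag_sqrt S = S"
proof -
  have "(diag_sqrt S ** diag_sqrt S) $ i $ j = S $ i $ j" for i j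
  proof -
    have "(diag_sqrt S ** diag_sqrt S) $ i $ j
        = (\<Sum>k\<in>UNIV. (if i = k then sqrt (S $ i $ i) else 0) * (if k = j then sqrt (S $ k $ k) else 0))"
      by (simp add: matrix_matrix_mult_def diag_sqrt_def)
    also have "\<dots> = (\<Sum>k\<in>UNIV. if k = i then (if i = j then sqrt (S $ i $ i) * sqrt (S $ i $ i) else 0) else 0)"
      by (rule sum.cong) auto
    also have "\<dots> = S $ i $ j"
      using assms unfolding is_diagonal_def by (auto simp: real_sqrt_mult[symmetric])
    finally show ?thesis .
  qed
  then show ?thesis
    by (simp add: vec_eq_iff)
qed

lemma eigendecomposition_factor_mult_transpose:
  fixes L U S M :: "real^'n::finite^'n"
  assumes "is_eigendecomposition L U S" and "orthogonal_matrix M"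
  shows "(U ** diag_sqrt S ** M) ** transpose (U ** diag_sqrt S ** M) = L"
proof -
  have S: "is_diagonal S" "\<And>i. S $ i $ i \<ge> 0" and L: "L = U ** S ** transpose U"
    using assms(1) unfolding is_eigendecomposition_def by auto
  have "(U ** diag_sqrt S ** M) ** transpose (U ** diag_sqrt S ** M)
      = U ** diag_sqrt S ** (M ** transpose M) ** diag_sqrt S ** transpose U"
    by (simp add: matrix_transpose_mul matrix_mul_assoc)
  also have "\<dots> = U ** (diag_sqrt S ** diag_sqrt S) ** transpose U"
    using assms(2) by (simp add: orthogonal_matrix_def matrix_mul_assoc)
  also have "\<dots> = L"
    by (simp add: diag_sqrt_mult_self[OF S] L)
  finally show ?thesis .
qed

lemma laplacian_diagonal_pos:
  assumes "simple_graph_no_isolated E"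
  shows "laplacian E $ i $ i > 0"
proof -
  obtain j where "E i j"
    using assms unfolding simple_graph_no_isolated_def by blast
  then have "1 \<le> (\<Sum>k\<in>UNIV. adj_matrix E $ i $ k)"
    using member_le_sum[of j UNIV "\<lambda>k. adj_matrix E $ i $ k"]
    by (simp add: adj_matrix_def)
  moreover have "adj_matrix E $ i $ i = 0"
    using assms unfolding simple_graph_no_isolated_def adj_matrix_def by simp
  ultimately show ?thesis
    by (simp add: laplacian_def degree_matrix_def)
qed

lemma laplacian_off_diagonal:
  "i \<noteq> j \<Longrightarrow> laplacian E $ i $ j = - adj_matrix E $ i $ j"
  by (simp add: laplacian_def degree_matrix_def)

lemma neg_laplacian_row_max_iff_adjacent:
  fixes c :: real
  assumes "simple_graph_no_isolated E" and "c > 0"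
  defines "A \<equiv> - (c *\<^sub>R laplacian E)"
  shows "A $ i $ j = Max (range (\<lambda>k. A $ i $ k)) \<longleftrightarrow> adj_matrix E $ i $ j = 1"
proof -
  have A: "A $ i $ k = (if i = k then - c * laplacian E $ i $ i else if E i k then c else 0)" for k
    by (simp add: A_def laplacian_off_diagonal adj_matrix_def)
  have diag_neg: "- c * laplacian E $ i $ i < 0"
    using laplacian_diagonal_pos[OF assms(1)] assms(2) by simp
  have no_loop: "\<not> E i i"
    using assms(1) unfolding simple_graph_no_isolated_def by blast
  have "Max (range (\<lambda>k. A $ i $ k)) = c"
  proof (rule Max_eqI)
    obtain j where "E i j"
      using assms(1) unfolding simple_graph_no_isolated_def by blast
    with no_loop have "A $ i $ j = c"
      by (auto simp: A)
    then show "c \<in> range (\<lambda>k. A $ i $ k)"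
      by (metis rangeI)
  qed (use A diag_neg assms(2) in auto)
  then show ?thesis
    using A diag_neg no_loop assms(2) by (auto simp: adj_matrix_def)
qed

lemma adjacency_identifying_if_mult_transpose_eq_laplacian:
  fixes P :: "real^'e::finite^'n::finite"
  assumes "dk > 0" and "simple_graph_no_isolated E"
    and "P ** transpose P = laplacian E"
  shows "adjacency_identifying dk E P"
proof -
  define WK :: "real^'e^'e" where "WK = - mat 1"
  have "P ** WK = - P"
    by (simp add: WK_def vec_eq_iff matrix_matrix_mult_def mat_def if_distrib cong: if_cong)
  moreover have "P ** transpose (- P) = - (P ** transpose P)"
    by (simp add: vec_eq_iff matrix_matrix_mult_def transpose_def sum_negf)
  ultimately have attention:
    "(1 / sqrt dk) *\<^sub>R ((P ** mat 1) ** transpose (P ** WK)) = - ((1 / sqrt dk) *\<^sub>R laplacian E)"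
    using assms(3) by simp
  have "1 / sqrt dk > 0"
    using assms(1) by simp
  then show ?thesis
    unfolding adjacency_identifying_def Let_def
    by (intro exI[of _ "mat 1"] exI[of _ WK])
      (simp only: attention neg_laplacian_row_max_iff_adjacent[OF assms(2)] simp_thms)
qed

theorem lemmaF9:
  fixes E :: "'n::finite \<Rightarrow> 'n \<Rightarrow> bool"
    and U S M :: "real^'n^'n"
    and dk :: real
  assumes "dk > 0"
    and "simple_graph_no_isolated E"
    and "is_eigendecomposition (laplacian E) U S"
    and "permutation_matrix M"
  shows "adjacency_identifying dk E (U ** diag_sqrt S ** M)"
  using assms(1,2)
  by (rule adjacency_identifying_if_mult_transpose_eq_laplacian)
    (rule eigendecomposition_factor_mult_transpose[OF assms(3)
          orthogonal_matrix_permutation_matrix[OF assms(4)]])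

end
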